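(* Let $\mathbb{H}$ be a finite dimensional real Hilbert space, let $C\subseteq\mathbb{H}$ be a closed convex cone, let $K\subseteq C$ be a closed convex set with $0\in K$, and let $f:C\to\mathbb{H}$ be a weakly homogeneous map of degree $\gamma>0$ with leading term $f^\infty$. Let $F:\mathbb{H}\to\mathbb{H}$ be a given continuous extension of $f$ and let $F_K^{\mathrm{nat}}(x):=x-\Pi_K(x-F(x))$ be the natural map. Suppose: (a) $f^\infty$ is copositive on $K$; (b) for $x\in K$ with $\|x\|$ sufficiently large (i.e. as $\|x\|\to\infty$), there exists no $c>0$ such that $-x=c\,(f(x)-f^\infty(x))$; (c) $\lim_{x\in K,\|x\|\to\infty}\|F_K^{\mathrm{nat}}(x)\|=\infty$, and $\|f(x)-f^\infty(x)\|\le\|F_K^{\mathrm{nat}}(x)\|$ for all $x\in K$ with $\|x\|$ sufficiently large. Then the solution set $\mathrm{SOL}(f,K)$ of $\mathrm{WHVI}(f,K)$ is nonempty and compact.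
   Context: A continuous map $h:C\to\mathbb{H}$ is positively homogeneous of degree $\gamma\ge 0$ if $h(\lambda x)=\lambda^\gamma h(x)$ for all $x\in C$, $\lambda>0$. A map $f:C\to\mathbb{H}$ is weakly homogeneous of degree $\gamma$ if $f=h+g$ where $h$ is continuous and positively homogeneous of degree $\gamma$ on $C$ and $g$ is continuous on $C$ with $\lim_{x\in C,\|x\|\to\infty} g(x)/\|x\|^\gamma=0$; the leading term is $f^\infty:=h$. A map $\psi$ is copositive on a set $D$ if $\langle \psi(x)-\psi(0),x\rangle\ge 0$ for all $x\in D$. $\Pi_K$ denotes the orthogonal projection onto $K$. $\mathrm{WHVI}(f,K)$ is the problem of finding $x^*\in K$ with $\langle f(x^* ),y-x^*\rangle\ge 0$ for all $y\in K$; $\mathrm{SOL}(f,K)$ is its solution set. *)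

theory Defs
  imports "HOL-Analysis.Analysis"
begin

definition pos_homogeneous_on :: "'a::real_normed_vector set \<Rightarrow> real \<Rightarrow> ('a \<Rightarrow> 'b::real_normed_vector) \<Rightarrow> bool" where
  "pos_homogeneous_on C \<gamma> h \<longleftrightarrow> continuous_on C h \<and> \<gamma> \<ge> 0 \<and>
     (\<forall>x\<in>C. \<forall>t::real. t > 0 \<longrightarrow> h (t *\<^sub>R x) = (t powr \<gamma>) *\<^sub>R h x)"

definition weakly_homogeneous_on ::
  "'a::real_normed_vector set \<Rightarrow> real \<Rightarrow> ('a \<Rightarrow> 'b::real_normed_vector) \<Rightarrow> ('a \<Rightarrow> 'b) \<Rightarrow> bool" where
  "weakly_homogeneous_on C \<gamma> f h \<longleftrightarrow> pos_homogeneous_on C \<gamma> h \<and>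
     (\<exists>g. continuous_on C g \<and> (\<forall>x\<in>C. f x = h x + g x) \<and>
          (\<forall>\<epsilon>>0. \<exists>R. \<forall>x\<in>C. norm x \<ge> R \<longrightarrow> norm (g x /\<^sub>R (norm x powr \<gamma>)) \<le> \<epsilon>))"

definition copositive_on :: "'a::real_inner set \<Rightarrow> ('a \<Rightarrow> 'a) \<Rightarrow> bool" where
  "copositive_on D \<psi> \<longleftrightarrow> (\<forall>x\<in>D. inner (\<psi> x - \<psi> 0) x \<ge> 0)"

definition natural_map :: "'a::euclidean_space set \<Rightarrow> ('a \<Rightarrow> 'a) \<Rightarrow> 'a \<Rightarrow> 'a" where
  "natural_map K F x = x - closest_point K (x - F x)"

definition SOL :: "('a::real_inner \<Rightarrow> 'a) \<Rightarrow> 'a set \<Rightarrow> 'a set" where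
  "SOL f K = {x \<in> K. \<forall>y\<in>K. inner (f x) (y - x) \<ge> 0}"

end

theory Submission
  imports Defs
begin

(* Solutions of WHVI(f,K) are the zeros of the natural map, i.e. the fixed points of
   x \<mapsto> \<Pi>_K(x - F x). Deform this map through H t x = \<Pi>_K(t (x - F x)), 0 \<le> t \<le> 1, which is
   constantly 0 at t = 0. The hypotheses keep all fixed points of H in one ball: for 0 < t < 1
   a fixed point x satisfies t \<parallel>F_K^nat x\<parallel> \<le> (1 - t) \<parallel>x\<parallel> (nonexpansiveness of \<Pi>_K) and
   t \<langle>F x, x\<rangle> \<le> -(1 - t) \<parallel>x\<parallel>\<^sup>2 (the variational inequality of \<Pi>_K tested at 0), and with
   copositivity and (c) these force -x to be a positive multiple of f x - f\<^sup>\<infinity> x, which (b)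
   excludes. Brouwer's theorem on a ball, with the parameter t switched off near the boundary,
   then gives a fixed point of H 1, and the a priori bound gives compactness. *)

lemma closest_point_eq_iff_inner_le:
  fixes K :: "'a::euclidean_space set"
  assumes "convex K" "closed K" "x \<in> K"
  shows "closest_point K z = x \<longleftrightarrow> (\<forall>y\<in>K. inner (z - x) (y - x) \<le> 0)"
proof
  assume "closest_point K z = x"
  then show "\<forall>y\<in>K. inner (z - x) (y - x) \<le> 0"
    using closest_point_dot[OF assms(1,2)] by blast
next
  assume obtuse: "\<forall>y\<in>K. inner (z - x) (y - x) \<le> 0"
  have "dist z x \<le> dist z y" if "y \<in> K" for y
  proof -
    have "inner (z - x) (y - x) \<le> 0"
      using obtuse that by blast
    then have "(dist z x)\<^sup>2 \<le> (dist z x)\<^sup>2 - 2 * inner (z - x) (y - x) + (norm (y - x))\<^sup>2"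
      using zero_le_power2[of "norm (y - x)"] by linarith
    also have "\<dots> = (dist z y)\<^sup>2"
      by (simp add: dist_norm power2_norm_eq_inner inner_diff inner_commute)
    finally show ?thesis
      by (simp add: power2_le_iff_abs_le)
  qed
  then show "closest_point K z = x"
    using closest_point_unique[OF assms] by simp
qed

lemma closest_point_along_ray:
  fixes K :: "'a::euclidean_space set"
  assumes "convex K" "closed K" "K \<noteq> {}" "closest_point K z = x" "c > 0"
  shows "closest_point K (x + c *\<^sub>R (z - x)) = x"
proof -
  have "x \<in> K"
    using assms(4) closest_point_in_set[OF assms(2,3)] by blast
  with assms show ?thesis
    by (simp add: closest_point_eq_iff_inner_le mult_nonneg_nonpos)
qed

lemma add_eq_0_if_norm_le_and_inner_le:
  fixes u v :: "'a::real_inner"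
  assumes "norm u \<le> norm v" "inner u v \<le> - (norm v)\<^sup>2"
  shows "u + v = 0"
proof -
  have "(norm (u + v))\<^sup>2 = (norm u)\<^sup>2 + 2 * inner u v + (norm v)\<^sup>2"
    by (simp add: power2_norm_eq_inner inner_add inner_commute)
  also have "\<dots> \<le> 0"
    using assms(2) power_mono[OF assms(1) norm_ge_zero, of 2] by linarith
  finally show ?thesis
    by simp
qed

lemma norm_closest_point_cball:
  fixes y :: "'a::euclidean_space"
  assumes "r > 0" "y \<notin> cball 0 r"
  shows "norm (closest_point (cball 0 r) y) = r"
proof -
  have hull: "affine hull cball 0 r = (UNIV :: 'a set)"
    using assms(1) by (simp add: affine_hull_nonempty_interior)
  then have "closest_point (cball 0 r) y \<in> rel_frontier (cball 0 r)"
    using assms by (intro closest_point_in_rel_frontier) (auto simp: rel_interior_interior)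
  then show ?thesis
    using assms(1) by (simp add: rel_frontier_frontier hull)
qed

lemma homotopy_fixpoint_exists:
  fixes H :: "real \<Rightarrow> 'a::euclidean_space \<Rightarrow> 'a"
  assumes contH: "continuous_on UNIV (\<lambda>(t, x). H t x)"
    and H0: "\<And>x. H 0 x = 0"
    and bounded: "\<And>t x. 0 \<le> t \<Longrightarrow> t \<le> 1 \<Longrightarrow> H t x = x \<Longrightarrow> norm x < R"
  obtains x where "H 1 x = x"
proof -
  have "R > 0"
    using bounded[of 0 0] H0 by simp
  define r where "r = R + 1"
  have "r > 0"
    using \<open>R > 0\<close> unfolding r_def by simp
  \<comment> \<open>\<tau> is 1 on the ball of radius R and 0 on the sphere of radius r, where Brouwer's fixed
      point might land\<close>
  define \<tau> where "\<tau> x = max 0 (min 1 (r - norm x))" for x :: 'a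
  define \<Phi> where "\<Phi> x = closest_point (cball 0 r) (H (\<tau> x) x)" for x
  have "continuous_on UNIV \<tau>"
    unfolding \<tau>_def by (intro continuous_intros)
  then have "continuous_on UNIV (\<lambda>x. H (\<tau> x) x)"
    using continuous_on_compose2[OF contH continuous_on_Pair[OF _ continuous_on_id]] by simp
  then have contH\<tau>: "continuous_on (cball 0 r) (\<lambda>x. H (\<tau> x) x)"
    by (rule continuous_on_subset) simp
  have contP: "continuous_on UNIV (closest_point (cball (0::'a) r))"
    using \<open>r > 0\<close> by (simp add: continuous_on_closest_point)
  have "continuous_on (cball 0 r) \<Phi>"
    unfolding \<Phi>_def by (rule continuous_on_compose2[OF contP contH\<tau> subset_UNIV])
  moreover have "\<Phi> \<in> cball 0 r \<rightarrow> cball 0 r"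
    unfolding \<Phi>_def using \<open>r > 0\<close> closest_point_in_set[OF closed_cball] by fastforce
  ultimately obtain x where "\<Phi> x = x"
    using brouwer_ball[OF \<open>r > 0\<close>] by blast
  show ?thesis
  proof (cases "H (\<tau> x) x \<in> cball 0 r")
    case True
    then have fixed: "H (\<tau> x) x = x"
      using \<open>\<Phi> x = x\<close> closest_point_self[OF True] unfolding \<Phi>_def by argo
    moreover have "0 \<le> \<tau> x" "\<tau> x \<le> 1"
      unfolding \<tau>_def by auto
    ultimately have "norm x < R"
      using bounded by blast
    then have "\<tau> x = 1"
      unfolding \<tau>_def r_def by simp
    then show ?thesis
      using fixed that by simp
  next
    case False
    then have "norm x = r"
      using \<open>\<Phi> x = x\<close> norm_closest_point_cball[OF \<open>r > 0\<close> False] unfolding \<Phi>_def by metis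
    then have "\<tau> x = 0"
      unfolding \<tau>_def by simp
    then show ?thesis
      using False H0 \<open>r > 0\<close> by simp
  qed
qed

lemma pos_homogeneous_on_zero:
  assumes "pos_homogeneous_on C \<gamma> h" "\<gamma> > 0" "0 \<in> C"
  shows "h 0 = 0"
proof -
  have "h 0 = (2 powr \<gamma>) *\<^sub>R h 0"
    using assms(1,3) unfolding pos_homogeneous_on_def by (metis scaleR_zero_right zero_less_numeral)
  moreover have "2 powr \<gamma> \<noteq> (1::real)"
    using assms(2) by simp
  ultimately show ?thesis
    by (metis scaleR_cancel_right scaleR_one)
qed

lemma SOL_eq_natural_map_zeros:
  fixes K :: "'a::euclidean_space set"
  assumes "convex K" "closed K" "K \<noteq> {}" "\<forall>x\<in>K. F x = f x"
  shows "SOL f K = {x. natural_map K F x = 0}"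
proof -
  have "natural_map K F x = 0 \<longleftrightarrow> x \<in> K \<and> closest_point K (x - F x) = x" for x
    unfolding natural_map_def using closest_point_in_set[OF assms(2,3), of "x - F x"] by auto
  moreover have "closest_point K (x - F x) = x \<longleftrightarrow> (\<forall>y\<in>K. inner (f x) (y - x) \<ge> 0)"
    if "x \<in> K" for x
    using that assms(4) by (simp add: closest_point_eq_iff_inner_le[OF assms(1,2) that])
  ultimately show ?thesis
    unfolding SOL_def by blast
qed

definition natural_homotopy :: "'a::euclidean_space set \<Rightarrow> ('a \<Rightarrow> 'a) \<Rightarrow> real \<Rightarrow> 'a \<Rightarrow> 'a" where
  "natural_homotopy K F t x = closest_point K (t *\<^sub>R (x - F x))"

lemma natural_homotopy_0: "0 \<in> K \<Longrightarrow> natural_homotopy K F 0 x = 0"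
  by (simp add: natural_homotopy_def closest_point_self)

lemma natural_homotopy_1_eq_self_iff: "natural_homotopy K F 1 x = x \<longleftrightarrow> natural_map K F x = 0"
  by (auto simp: natural_homotopy_def natural_map_def)

lemma continuous_on_natural_homotopy:
  fixes K :: "'a::euclidean_space set"
  assumes "convex K" "closed K" "K \<noteq> {}" "continuous_on UNIV F"
  shows "continuous_on UNIV (\<lambda>(t, x). natural_homotopy K F t x)"
proof -
  have "continuous_on UNIV (\<lambda>p::real \<times> 'a. F (snd p))"
    using continuous_on_compose2[OF assms(4) continuous_on_snd[OF continuous_on_id]] by simp
  then have "continuous_on UNIV (\<lambda>p. fst p *\<^sub>R (snd p - F (snd p)))"
    by (intro continuous_intros)
  then show ?thesis
    unfolding natural_homotopy_def case_prod_beta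
    by (rule continuous_on_compose2[OF continuous_on_closest_point[OF assms(1-3)]]) auto
qed

lemma norm_natural_map_le_if_natural_homotopy_fixpoint:
  fixes K :: "'a::euclidean_space set"
  assumes "convex K" "closed K" "K \<noteq> {}"
    and fixed: "natural_homotopy K F t x = x" and "0 < t" "t \<le> 1"
  shows "t * norm (natural_map K F x) \<le> (1 - t) * norm x"
proof -
  define z where "z = x - F x"
  \<comment> \<open>x is also the projection of the point of the ray from x through t z at parameter 1/t,
      which lies within ((1 - t) / t) \<parallel>x\<parallel> of z\<close>
  have "closest_point K (x + (1 / t) *\<^sub>R (t *\<^sub>R z - x)) = x"
    using closest_point_along_ray[OF assms(1-3)] fixed \<open>t > 0\<close>
    unfolding z_def natural_homotopy_def by simp
  moreover have "x + (1 / t) *\<^sub>R (t *\<^sub>R z - x) = z - ((1 - t) / t) *\<^sub>R x"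
    using \<open>t > 0\<close> by (simp add: algebra_simps diff_divide_distrib)
  ultimately have "norm (natural_map K F x)
      = dist (closest_point K (z - ((1 - t) / t) *\<^sub>R x)) (closest_point K z)"
    unfolding natural_map_def z_def by (simp add: dist_norm)
  also have "\<dots> \<le> dist (z - ((1 - t) / t) *\<^sub>R x) z"
    by (rule closest_point_lipschitz[OF assms(1-3)])
  also have "\<dots> = ((1 - t) / t) * norm x"
    using \<open>0 < t\<close> \<open>t \<le> 1\<close> by (simp add: dist_norm)
  finally show ?thesis
    using \<open>t > 0\<close> by (simp add: field_simps)
qed

lemma neg_on_remainder_ray_if_natural_homotopy_fixpoint:
  fixes K :: "'a::euclidean_space set"
  assumes "convex K" "closed K" "0 \<in> K"
    and fixed: "natural_homotopy K F t x = x" and "0 < t" "t < 1"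
    and copositive: "inner (h x) x \<ge> 0"
    and small: "norm (F x - h x) \<le> norm (natural_map K F x)"
  shows "\<exists>c>0. - x = c *\<^sub>R (F x - h x)"
proof -
  have "K \<noteq> {}"
    using \<open>0 \<in> K\<close> by blast
  define g where "g = F x - h x"
  have "t * norm g \<le> t * norm (natural_map K F x)"
    using small \<open>t > 0\<close> unfolding g_def by simp
  also have "\<dots> \<le> (1 - t) * norm x"
    using norm_natural_map_le_if_natural_homotopy_fixpoint[OF assms(1,2) \<open>K \<noteq> {}\<close> fixed]
      \<open>t > 0\<close> \<open>t < 1\<close> by simp
  finally have norm_le: "norm (t *\<^sub>R g) \<le> norm ((1 - t) *\<^sub>R x)"
    using \<open>t > 0\<close> \<open>t < 1\<close> by simp
  have "inner (t *\<^sub>R (x - F x) - x) (0 - x) \<le> 0"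
    using fixed closest_point_dot[OF assms(1-3)] unfolding natural_homotopy_def by metis
  then have "t * inner (F x) x \<le> - (1 - t) * inner x x"
    by (simp add: algebra_simps)
  moreover have "t * inner (h x) x \<ge> 0"
    using copositive \<open>t > 0\<close> by simp
  ultimately have "t * inner g x \<le> - (1 - t) * inner x x"
    unfolding g_def by (simp add: algebra_simps)
  then have "(1 - t) * (t * inner g x) \<le> (1 - t) * (- (1 - t) * inner x x)"
    using \<open>t < 1\<close> by (simp add: mult_left_mono)
  then have "inner (t *\<^sub>R g) ((1 - t) *\<^sub>R x) \<le> - (norm ((1 - t) *\<^sub>R x))\<^sup>2"
    by (simp add: power2_norm_eq_inner algebra_simps)
  then have "t *\<^sub>R g + (1 - t) *\<^sub>R x = 0"
    using add_eq_0_if_norm_le_and_inner_le norm_le by blast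
  then have rescaled: "(1 - t) *\<^sub>R (- x) = t *\<^sub>R g"
    by (metis add.commute minus_unique scaleR_minus_right)
  have "- x = (1 / (1 - t)) *\<^sub>R ((1 - t) *\<^sub>R (- x))"
    using \<open>t < 1\<close> by simp
  also have "\<dots> = (t / (1 - t)) *\<^sub>R g"
    unfolding rescaled by simp
  finally have "- x = (t / (1 - t)) *\<^sub>R g" .
  moreover have "t / (1 - t) > 0"
    using \<open>0 < t\<close> \<open>t < 1\<close> by simp
  ultimately show ?thesis
    unfolding g_def by blast
qed

lemma natural_homotopy_fixpoints_bounded:
  fixes K :: "'a::euclidean_space set"
  assumes "convex K" "closed K" "0 \<in> K" "R > 0"
    and copositive: "\<forall>x\<in>K. inner (h x) x \<ge> 0"
    and no_ray: "\<forall>x\<in>K. norm x \<ge> R \<longrightarrow> \<not> (\<exists>c>0. - x = c *\<^sub>R (F x - h x))"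
    and nonzero: "\<forall>x\<in>K. norm x \<ge> R \<longrightarrow> natural_map K F x \<noteq> 0"
    and small: "\<forall>x\<in>K. norm x \<ge> R \<longrightarrow> norm (F x - h x) \<le> norm (natural_map K F x)"
    and "0 \<le> t" "t \<le> 1" and fixed: "natural_homotopy K F t x = x"
  shows "norm x < R"
proof (rule ccontr)
  assume "\<not> norm x < R"
  then have large: "norm x \<ge> R"
    by simp
  have "x \<in> K"
    using fixed closest_point_in_set[OF assms(2), of "t *\<^sub>R (x - F x)"] \<open>0 \<in> K\<close>
    unfolding natural_homotopy_def by auto
  consider "t = 0" | "t = 1" | "0 < t" "t < 1"
    using \<open>0 \<le> t\<close> \<open>t \<le> 1\<close> by linarith
  then show False
  proof cases
    case 1
    then have "x = 0"
      using fixed natural_homotopy_0[OF \<open>0 \<in> K\<close>] by simp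
    then show False
      using large \<open>R > 0\<close> by simp
  next
    case 2
    then show False
      using fixed natural_homotopy_1_eq_self_iff nonzero large \<open>x \<in> K\<close> by blast
  next
    case 3
    then show False
      using neg_on_remainder_ray_if_natural_homotopy_fixpoint[where h=h, OF assms(1-3) fixed 3]
        copositive no_ray small large \<open>x \<in> K\<close> by blast
  qed
qed

lemma SOL_nonempty_compact_if_natural_homotopy_fixpoints_bounded:
  fixes K :: "'a::euclidean_space set"
  assumes "convex K" "closed K" "0 \<in> K" "continuous_on UNIV F" "\<forall>x\<in>K. F x = f x"
    and bounded: "\<And>t x. 0 \<le> t \<Longrightarrow> t \<le> 1 \<Longrightarrow> natural_homotopy K F t x = x \<Longrightarrow> norm x < R"
  shows "SOL f K \<noteq> {} \<and> compact (SOL f K)"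
proof -
  have "K \<noteq> {}"
    using \<open>0 \<in> K\<close> by blast
  have SOL: "SOL f K = {x. natural_homotopy K F 1 x = x}"
    using SOL_eq_natural_map_zeros[OF assms(1,2) \<open>K \<noteq> {}\<close> assms(5)]
    by (simp add: natural_homotopy_1_eq_self_iff)
  have contH: "continuous_on UNIV (\<lambda>(t, x). natural_homotopy K F t x)"
    using continuous_on_natural_homotopy[OF assms(1,2) \<open>K \<noteq> {}\<close> assms(4)] .
  obtain x where "natural_homotopy K F 1 x = x"
    by (rule homotopy_fixpoint_exists[OF contH natural_homotopy_0[OF \<open>0 \<in> K\<close>] bounded])
  then have "SOL f K \<noteq> {}"
    unfolding SOL by blast
  moreover have "closed (SOL f K)"
  proof -
    have "continuous_on UNIV (natural_homotopy K F 1)"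
      using continuous_on_compose2[OF contH continuous_on_Pair[OF continuous_on_const continuous_on_id]]
      by simp
    then show ?thesis
      unfolding SOL by (rule closed_Collect_eq[OF _ continuous_on_id])
  qed
  moreover have "bounded (SOL f K)"
    using bounded[of 1] unfolding SOL by (intro bounded_subset[OF bounded_ball, of _ 0 R]) auto
  ultimately show ?thesis
    by (simp add: compact_eq_bounded_closed)
qed

theorem theorem3p2:
  fixes C K :: "'a::euclidean_space set"
    and f finf F :: "'a \<Rightarrow> 'a"
    and \<gamma> :: real
  assumes C_cone: "cone C" and C_convex: "convex C" and C_closed: "closed C"
    and K_sub: "K \<subseteq> C" and K_closed: "closed K" and K_convex: "convex K" and K0: "0 \<in> K"
    and gamma_pos: "\<gamma> > 0"
    and f_wh: "weakly_homogeneous_on C \<gamma> f finf"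
    and F_cont: "continuous_on UNIV F" and F_ext: "\<forall>x\<in>C. F x = f x"
    and a: "copositive_on K finf"
    and b: "\<exists>R. \<forall>x\<in>K. norm x \<ge> R \<longrightarrow> \<not> (\<exists>c>0. - x = c *\<^sub>R (f x - finf x))"
    and c1: "\<forall>M. \<exists>R. \<forall>x\<in>K. norm x \<ge> R \<longrightarrow> norm (natural_map K F x) \<ge> M"
    and c2: "\<exists>R. \<forall>x\<in>K. norm x \<ge> R \<longrightarrow> norm (f x - finf x) \<le> norm (natural_map K F x)"
  shows "SOL f K \<noteq> {} \<and> compact (SOL f K)"
proof -
  have FK: "\<forall>x\<in>K. F x = f x"
    using F_ext K_sub by blast
  have "finf 0 = 0"
    using pos_homogeneous_on_zero f_wh gamma_pos K0 K_sub
    unfolding weakly_homogeneous_on_def by blast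
  then have copositive: "\<forall>x\<in>K. inner (finf x) x \<ge> 0"
    using a unfolding copositive_on_def by simp
  obtain R\<^sub>b R\<^sub>1 R\<^sub>2 where "\<forall>x\<in>K. norm x \<ge> R\<^sub>b \<longrightarrow> \<not> (\<exists>c>0. - x = c *\<^sub>R (f x - finf x))"
    and "\<forall>x\<in>K. norm x \<ge> R\<^sub>1 \<longrightarrow> norm (natural_map K F x) \<ge> 1"
    and "\<forall>x\<in>K. norm x \<ge> R\<^sub>2 \<longrightarrow> norm (f x - finf x) \<le> norm (natural_map K F x)"
    using b c1[THEN spec, of 1] c2 by blast
  with FK obtain R where "R > 0"
    and "\<forall>x\<in>K. norm x \<ge> R \<longrightarrow> \<not> (\<exists>c>0. - x = c *\<^sub>R (F x - finf x))"
    and "\<forall>x\<in>K. norm x \<ge> R \<longrightarrow> natural_map K F x \<noteq> 0"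
    and "\<forall>x\<in>K. norm x \<ge> R \<longrightarrow> norm (F x - finf x) \<le> norm (natural_map K F x)"
    by (intro that[of "max 1 (max R\<^sub>b (max R\<^sub>1 R\<^sub>2))"]) auto
  then have "norm x < R" if "0 \<le> t" "t \<le> 1" "natural_homotopy K F t x = x" for t x
    using natural_homotopy_fixpoints_bounded[OF K_convex K_closed K0 _ copositive] that by blast
  then show ?thesis
    by (rule SOL_nonempty_compact_if_natural_homotopy_fixpoints_bounded[OF K_convex K_closed K0 F_cont FK])
qed

end
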